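(* Fix $0<\varepsilon<1$ and let $n$ be sufficiently large with respect to $\varepsilon$; let $m=\lceil n/\log^8 n\rceil$. Let $P=\{(u_1,v_1),\dots,(u_s,v_s)\}$ be an $s$-pairing in $[n]$ with $s\ge\varepsilon n$, and let $\pi:[n]\to[m]$ be a map that is $\varepsilon$-respectful of $P$ and satisfies $|\pi^{-1}(x)|\le 2n/m$ for all $x\in[m]$. Let $\Pi$ be the set of all unordered pairs $\big\{\{\pi(u_i),\pi(u_j)\},\{\pi(v_i),\pi(v_j)\}\big\}$ over all $i,j\in[s]$ with $\pi(u_i)\neq\pi(u_j)$, $\pi(v_i)\ne\pi(v_j)$ and $\{\pi(u_i),\pi(u_j)\}\neq\{\pi(v_i),\pi(v_j)\}$. Then $|\Pi|\ge\varepsilon^4 n^2/6$.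
   Context: Logarithms are natural. An $s$-pairing in $[n]$ is a collection $\{(u_1,v_1),\dots,(u_s,v_s)\}$ of pairs where $u_1,\dots,u_s,v_1,\dots,v_s$ are distinct elements of $[n]$. A map $\pi:[n]\to[m]$ is $\varepsilon$-respectful of it if there is $I\subseteq[s]$ with $|I|\ge\varepsilon s$ such that $\pi(u_i)\ne\pi(v_i)$ for all $i\in I$ and the pairs $\{\pi(u_i),\pi(v_i)\}$, $i\in I$, are pairwise distinct. *)

theory Defs
  imports Complex_Main
begin

definition is_pairing :: "nat \<Rightarrow> nat \<Rightarrow> (nat \<Rightarrow> nat) \<Rightarrow> (nat \<Rightarrow> nat) \<Rightarrow> bool" where
  "is_pairing n s u v \<longleftrightarrow>
     u ` {1..s} \<subseteq> {1..n} \<and> v ` {1..s} \<subseteq> {1..n} \<and>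
     inj_on u {1..s} \<and> inj_on v {1..s} \<and> u ` {1..s} \<inter> v ` {1..s} = {}"

definition respectful :: "real \<Rightarrow> (nat \<Rightarrow> nat) \<Rightarrow> nat \<Rightarrow> (nat \<Rightarrow> nat) \<Rightarrow> (nat \<Rightarrow> nat) \<Rightarrow> bool" where
  "respectful eps f s u v \<longleftrightarrow>
     (\<exists>I \<subseteq> {1..s}. real (card I) \<ge> eps * real s \<and>
        (\<forall>i\<in>I. f (u i) \<noteq> f (v i)) \<and>
        inj_on (\<lambda>i. {f (u i), f (v i)}) I)"

definition Pi_set :: "(nat \<Rightarrow> nat) \<Rightarrow> nat \<Rightarrow> (nat \<Rightarrow> nat) \<Rightarrow> (nat \<Rightarrow> nat) \<Rightarrow> nat set set set" where
  "Pi_set f s u v =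
     {{{f (u i), f (u j)}, {f (v i), f (v j)}} | i j.
        i \<in> {1..s} \<and> j \<in> {1..s} \<and> f (u i) \<noteq> f (u j) \<and> f (v i) \<noteq> f (v j) \<and>
        {f (u i), f (u j)} \<noteq> {f (v i), f (v j)}}"

end

theory Submission
  imports Defs "HOL-Real_Asymp.Real_Asymp"
begin

text \<open>Let I be an index set witnessing that f is eps-respectful, so |I| \<ge> eps^2 n.
  Since every class of f has at most 2n/m elements, all but at most 4|I| n/m of the
  ordered pairs (i, j) \<in> I \<times> I satisfy f(u i) \<noteq> f(u j) and f(v i) \<noteq> f(v j); for
  m \<ge> 12/eps^2 this leaves at least (2/3) eps^4 n^2 pairs. Such a pair determines the quadruple
  (f(u i), f(u j), f(v i), f(v j)), and conversely, because {f(u i), f(v i)} determines i.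
  No quadruple (a, b, c, d) occurs together with its swap (c, d, a, b), as both would come from
  the same i and force f(u i) = f(v i). Hence each element {{a, b}, {c, d}} of \<Pi> is hit by at
  most four quadruples.\<close>

lemma card_le_mult_card_image:
  assumes "finite A" and "\<And>y. y \<in> f ` A \<Longrightarrow> card {x\<in>A. f x = y} \<le> k"
  shows "card A \<le> k * card (f ` A)"
proof -
  have "card A = card (\<Union>y\<in>f ` A. {x\<in>A. f x = y})"
    by (rule arg_cong[where f = card]) auto
  also have "\<dots> \<le> (\<Sum>y\<in>f ` A. card {x\<in>A. f x = y})"
    using assms(1) by (intro card_UN_le) simp
  also have "\<dots> \<le> k * card (f ` A)"
    using sum_bounded_above[of "f ` A" _ k] assms(2) by (simp add: mult.commute)
  finally show ?thesis .
qed

definition edge_pair :: "'a \<times> 'a \<times> 'a \<times> 'a \<Rightarrow> 'a set set" where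
  "edge_pair = (\<lambda>(a, b, c, d). {{a, b}, {c, d}})"

lemma card_edge_pair_fiber_le:
  assumes swap_free: "\<And>a b c d. (a, b, c, d) \<in> T \<Longrightarrow> (c, d, a, b) \<notin> T"
  shows "card {t\<in>T. edge_pair t = {{a, b}, {c, d}}} \<le> 4"
proof -
  define F where "F = {t\<in>T. edge_pair t = {{a, b}, {c, d}}}"
  define orderings where "orderings = set [(a, b, c, d), (b, a, c, d), (a, b, d, c), (b, a, d, c)]"
  define swap :: "'a \<times> 'a \<times> 'a \<times> 'a \<Rightarrow> 'a \<times> 'a \<times> 'a \<times> 'a"
    where "swap = (\<lambda>(w, x, y, z). (y, z, w, x))"
  define g where "g t = (if t \<in> orderings then t else swap t)" for t
  \<comment> \<open>Every tuple of the fiber is an ordering or the swap of one, and by swap-freeness g is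
    injective on the fiber.\<close>
  have fiber: "t \<in> orderings \<or> swap t \<in> orderings" if "edge_pair t = {{a, b}, {c, d}}" for t
    using that unfolding orderings_def swap_def edge_pair_def
    by (cases t) (auto simp: doubleton_eq_iff)
  have "inj_on g F"
  proof (rule inj_onI)
    fix t t' assume "t \<in> F" "t' \<in> F" "g t = g t'"
    then show "t = t'"
      using swap_free unfolding F_def g_def swap_def by (auto split: if_splits prod.splits)
  qed
  moreover have "g ` F \<subseteq> orderings"
    unfolding image_subset_iff F_def g_def using fiber by (metis (mono_tags, lifting) mem_Collect_eq)
  ultimately have "card F \<le> card orderings"
    by (rule card_inj_on_le) (simp add: orderings_def)
  also have "\<dots> \<le> 4"
    unfolding orderings_def by (rule order.trans[OF card_length]) simp
  finally show ?thesis
    unfolding F_def .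
qed

lemma card_swap_free_le_edge_pair_image:
  assumes "finite T" and "\<And>a b c d. (a, b, c, d) \<in> T \<Longrightarrow> (c, d, a, b) \<notin> T"
  shows "card T \<le> 4 * card (edge_pair ` T)"
  using assms(1)
proof (rule card_le_mult_card_image)
  fix e assume "e \<in> edge_pair ` T"
  then obtain a b c d where "e = {{a, b}, {c, d}}"
    by (auto simp: edge_pair_def)
  then show "card {t\<in>T. edge_pair t = e} \<le> 4"
    using card_edge_pair_fiber_le[OF assms(2)] by blast
qed

lemma card_collisions_le:
  assumes "finite I" and "\<And>i. i \<in> I \<Longrightarrow> real (card {j\<in>I. g j = g i}) \<le> c"
  shows "real (card {(i, j)\<in>I \<times> I. g i = g j}) \<le> real (card I) * c"
proof -
  have "{(i, j)\<in>I \<times> I. g i = g j} = Sigma I (\<lambda>i. {j\<in>I. g j = g i})" by auto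
  then have "card {(i, j)\<in>I \<times> I. g i = g j} = (\<Sum>i\<in>I. card {j\<in>I. g j = g i})"
    using assms(1) by simp
  then show ?thesis
    using sum_bounded_above[of I "\<lambda>i. real (card {j\<in>I. g j = g i})" c] assms(2) by simp
qed

lemma card_separated_pairs_ge:
  assumes "finite I"
    and "\<And>i. i \<in> I \<Longrightarrow> real (card {j\<in>I. g j = g i}) \<le> c"
    and "\<And>i. i \<in> I \<Longrightarrow> real (card {j\<in>I. h j = h i}) \<le> d"
  shows "real (card {(i, j)\<in>I \<times> I. g i \<noteq> g j \<and> h i \<noteq> h j})
    \<ge> real (card I) ^ 2 - real (card I) * (c + d)"
proof -
  define S where "S = {(i, j)\<in>I \<times> I. g i \<noteq> g j \<and> h i \<noteq> h j}"
  define Bg where "Bg = {(i, j)\<in>I \<times> I. g i = g j}"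
  define Bh where "Bh = {(i, j)\<in>I \<times> I. h i = h j}"
  have S_eq: "S = I \<times> I - (Bg \<union> Bh)" and "Bg \<union> Bh \<subseteq> I \<times> I"
    unfolding S_def Bg_def Bh_def by blast+
  then have "card (I \<times> I) - card (Bg \<union> Bh) \<le> card S"
    unfolding S_eq using assms(1)
    by (intro diff_card_le_card_Diff finite_subset[of "Bg \<union> Bh" "I \<times> I"]) simp_all
  then have "card I * card I \<le> card S + card Bg + card Bh"
    using card_Un_le[of Bg Bh] by (simp add: card_cartesian_product)
  then have "real (card I * card I) \<le> real (card S + card Bg + card Bh)"
    by (rule of_nat_mono)
  then have "real (card I) ^ 2 \<le> real (card S) + real (card Bg) + real (card Bh)"
    by (simp add: power2_eq_square)
  moreover have "real (card Bg) \<le> real (card I) * c" "real (card Bh) \<le> real (card I) * d"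
    unfolding Bg_def Bh_def using assms card_collisions_le by blast+
  ultimately show ?thesis
    unfolding S_def by (simp add: distrib_left)
qed

lemma finite_Pi_set: "finite (Pi_set f s u v)"
proof (rule finite_subset)
  show "Pi_set f s u v \<subseteq> (\<lambda>(i, j). {{f (u i), f (u j)}, {f (v i), f (v j)}}) ` ({1..s} \<times> {1..s})"
    unfolding Pi_set_def by auto
qed simp

lemma doubleton_pair_mem_Pi_set:
  assumes "i \<in> {1..s}" "j \<in> {1..s}" "f (u i) \<noteq> f (u j)" "f (v i) \<noteq> f (v j)"
    and "f (u i) \<noteq> f (v i)" "{f (u i), f (v i)} \<noteq> {f (u j), f (v j)}"
  shows "{{f (u i), f (u j)}, {f (v i), f (v j)}} \<in> Pi_set f s u v"
proof -
  have "{f (u i), f (u j)} \<noteq> {f (v i), f (v j)}"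
    using assms(5,6) by (auto simp: doubleton_eq_iff)
  with assms(1-4) show ?thesis
    unfolding Pi_set_def by blast
qed

lemma card_separated_pairs_le_card_Pi_set:
  assumes "I \<subseteq> {1..s}" and distinct: "\<forall>i\<in>I. f (u i) \<noteq> f (v i)"
    and inj: "inj_on (\<lambda>i. {f (u i), f (v i)}) I"
  shows "card {(i, j)\<in>I \<times> I. f (u i) \<noteq> f (u j) \<and> f (v i) \<noteq> f (v j)}
    \<le> 4 * card (Pi_set f s u v)"
proof -
  define G where "G = {(i, j)\<in>I \<times> I. f (u i) \<noteq> f (u j) \<and> f (v i) \<noteq> f (v j)}"
  define K where "K = (\<lambda>(i, j). (f (u i), f (u j), f (v i), f (v j)))"
  have index_eq: "i = i'" if "i \<in> I" "i' \<in> I" "{f (u i), f (v i)} = {f (u i'), f (v i')}" for i i'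
    using inj that by (auto dest: inj_onD)
  have "inj_on K G"
    by (rule inj_onI) (auto simp: K_def G_def intro: index_eq)
  moreover have "finite G"
    using finite_subset[OF \<open>I \<subseteq> {1..s}\<close>]
    by (intro finite_subset[of G "I \<times> I"]) (auto simp: G_def)
  moreover have "(c, d, a, b) \<notin> K ` G" if quadruple: "(a, b, c, d) \<in> K ` G" for a b c d
  proof
    assume "(c, d, a, b) \<in> K ` G"
    then obtain i' j' where "(i', j') \<in> G" "(c, d, a, b) = K (i', j')"
      by (auto simp: image_iff)
    moreover obtain i j where "(i, j) \<in> G" "(a, b, c, d) = K (i, j)"
      using quadruple by (auto simp: image_iff)
    ultimately have "i \<in> I" "i' \<in> I" "{f (u i), f (v i)} = {f (u i'), f (v i')}"
      and "f (u i) = f (v i')"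
      by (auto simp: K_def G_def)
    then show False
      using index_eq[of i i'] distinct by auto
  qed
  ultimately have "card G \<le> 4 * card (edge_pair ` K ` G)"
    by (metis card_image card_swap_free_le_edge_pair_image finite_imageI)
  moreover have "edge_pair ` K ` G \<subseteq> Pi_set f s u v"
  proof
    fix e assume "e \<in> edge_pair ` K ` G"
    then obtain i j where ij: "(i, j) \<in> G"
      and e: "e = {{f (u i), f (u j)}, {f (v i), f (v j)}}"
      by (auto simp: K_def edge_pair_def)
    then have "{f (u i), f (v i)} \<noteq> {f (u j), f (v j)}"
      using index_eq[of i j] by (auto simp: G_def)
    with ij \<open>I \<subseteq> {1..s}\<close> distinct show "e \<in> Pi_set f s u v"
      unfolding e G_def by (intro doubleton_pair_mem_Pi_set) auto
  qed
  ultimately show ?thesis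
    unfolding G_def by (meson card_mono finite_Pi_set le_trans mult_le_mono2)
qed

lemma quadratic_margin:
  fixes c e p :: real
  assumes "0 \<le> e" and "e \<le> c" and "c\<^sup>2 - c * e / 3 \<le> 4 * p"
  shows "e\<^sup>2 / 6 \<le> p"
proof -
  have "0 \<le> (c - e) * (c + 2 * e / 3)"
    using assms by simp
  also have "\<dots> = c\<^sup>2 - c * e / 3 - 2 * e\<^sup>2 / 3"
    by (simp add: field_simps power2_eq_square)
  finally show ?thesis
    using assms(3) by linarith
qed

lemma card_class_le:
  assumes "inj_on w {1..s}" "w ` {1..s} \<subseteq> {1..n}" "I \<subseteq> {1..s}" "i \<in> I"
    and f: "f ` {1..n} \<subseteq> {1..m}"
    and classes: "\<forall>x\<in>{1..m}. real (card {y\<in>{1..n}. f y = x}) \<le> 2 * real n / real m"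
  shows "real (card {j\<in>I. f (w j) = f (w i)}) \<le> 2 * real n / real m"
proof -
  have "w ` I \<subseteq> {1..n}"
    using assms(2,3) by blast
  then have "card {j\<in>I. f (w j) = f (w i)} \<le> card {y\<in>{1..n}. f y = f (w i)}"
    using assms(1,3) by (intro card_inj_on_le[of w]) (auto intro: inj_on_subset)
  moreover have "f (w i) \<in> {1..m}"
    using assms(2-4) f by blast
  ultimately show ?thesis
    using classes by (meson of_nat_le_iff order.trans)
qed

lemma card_Pi_set_ge:
  fixes eps :: real
  assumes "0 < eps" and pairing: "is_pairing n s u v" and "eps * real n \<le> real s"
    and f: "f ` {1..n} \<subseteq> {1..m}" and "respectful eps f s u v"
    and classes: "\<forall>x\<in>{1..m}. real (card {y\<in>{1..n}. f y = x}) \<le> 2 * real n / real m"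
    and m: "12 / eps\<^sup>2 \<le> real m"
  shows "eps ^ 4 * (real n)\<^sup>2 / 6 \<le> real (card (Pi_set f s u v))"
proof -
  obtain I where I: "I \<subseteq> {1..s}" "eps * real s \<le> real (card I)"
    and distinct: "\<forall>i\<in>I. f (u i) \<noteq> f (v i)" and inj: "inj_on (\<lambda>i. {f (u i), f (v i)}) I"
    using \<open>respectful eps f s u v\<close> unfolding respectful_def by blast
  define c where "c = real (card I)"
  define e where "e = eps\<^sup>2 * real n"
  have "c\<^sup>2 - c * (4 * real n / real m)
      \<le> real (card {(i, j)\<in>I \<times> I. f (u i) \<noteq> f (u j) \<and> f (v i) \<noteq> f (v j)})"
    using card_separated_pairs_ge[of I "\<lambda>i. f (u i)" "2 * real n / real m"
        "\<lambda>i. f (v i)" "2 * real n / real m"]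
      card_class_le[OF _ _ I(1) _ f classes] pairing finite_subset[OF I(1)]
    unfolding is_pairing_def c_def by auto
  also have "\<dots> \<le> 4 * real (card (Pi_set f s u v))"
    using card_separated_pairs_le_card_Pi_set[of I s f u v] I(1) distinct inj by linarith
  finally have "c\<^sup>2 - c * (4 * real n / real m) \<le> 4 * real (card (Pi_set f s u v))" .
  moreover have "0 \<le> e" "e \<le> c"
    using I(2) \<open>eps * real n \<le> real s\<close> \<open>0 < eps\<close> unfolding c_def e_def
    by (auto simp: power2_eq_square mult.assoc intro: order.trans[OF mult_left_mono])
  moreover have "c * (4 * real n / real m) \<le> c * (e / 3)"
  proof (rule mult_left_mono)
    have "0 < real m"
      using m \<open>0 < eps\<close> by (smt (verit) divide_pos_pos zero_less_power)
    then have "4 / real m \<le> eps\<^sup>2 / 3"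
      using m \<open>0 < eps\<close> by (simp add: field_simps)
    then show "4 * real n / real m \<le> e / 3"
      unfolding e_def using mult_left_mono[of "4 / real m" "eps\<^sup>2 / 3" "real n"]
      by (simp add: mult.commute)
  qed (simp add: c_def)
  ultimately have "e\<^sup>2 / 6 \<le> real (card (Pi_set f s u v))"
    by (intro quadratic_margin[of e c]) auto
  then show ?thesis
    unfolding e_def by (simp add: power_mult_distrib)
qed

theorem lemma5p2:
  fixes eps :: real
  assumes "0 < eps" "eps < 1"
  shows "\<exists>N. \<forall>n \<ge> N. \<forall>s u v (f :: nat \<Rightarrow> nat).
    let m = nat \<lceil>real n / (ln (real n)) ^ 8\<rceil> in
    is_pairing n s u v \<and> real s \<ge> eps * real n \<and>
    f ` {1..n} \<subseteq> {1..m} \<and> respectful eps f s u v \<and>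
    (\<forall>x \<in> {1..m}. real (card {y \<in> {1..n}. f y = x}) \<le> 2 * real n / real m)
    \<longrightarrow> real (card (Pi_set f s u v)) \<ge> eps ^ 4 * (real n)\<^sup>2 / 6"
proof -
  have "filterlim (\<lambda>n::nat. real n / ln (real n) ^ 8) at_top sequentially"
    by real_asymp
  then obtain N where N: "\<And>n. n \<ge> N \<Longrightarrow> 12 / eps\<^sup>2 \<le> real n / ln (real n) ^ 8"
    unfolding filterlim_at_top eventually_sequentially by blast
  have m_large: "12 / eps\<^sup>2 \<le> real (nat \<lceil>real n / ln (real n) ^ 8\<rceil>)" if "n \<ge> N" for n
    using N[OF that] real_nat_ceiling_ge by (rule order.trans)
  show ?thesis
    unfolding Let_def
    by (intro exI[of _ N] allI impI, elim conjE)
      (rule card_Pi_set_ge[OF \<open>0 < eps\<close> _ _ _ _ _ m_large])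
qed

end
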